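(* Let $k$ be a totally real number field, $\chi(x)\in\mathcal{O}_k[x]$ an irreducible monic polynomial of prime degree $n$ such that $K=k[x]/(\chi(x))$ is totally real, $X$ the $k$-variety of $n\times n$ matrices with characteristic polynomial $\chi$, $x_0\in X(\mathcal{O}_k)$, and $S:=\mathrm{S}_{x_0,k_v}$ the centralizer of $x_0$ in $\mathrm{SL}_{n,k_v}$, where $v$ is a non-archimedean place such that $K_v=K\otimes_kk_v$ is an unramified field extension of $k_v$. Let $\xi\in\mathrm{Br}\,X$ be such that $\tilde\xi_v$ is not identically $1$ on $X(k_v)$, and let $\kappa=\kappa_{\tilde\xi_v}\in\mathrm{Hom}(X_*(S),\mathbb{C}^\times)$ be as in the context. Then $S$ is an endoscopic group of $\mathrm{SL}_{n,k_v}$ associated with $\kappa$: namely, identifying $X_*(S)\cong\{(z_1,\dots,z_n)\in\mathbb{Z}^n:\sum z_i=0\}$ with coroots $\Phi^\vee=\{e_i-e_j: i\neq j\}$ of $\mathrm{SL}_n$ relative to the maximal torus $S$ and Weyl group $W\cong S_n$ acting by permutations, and letting $\sigma_S$ be the automorphism induced by the Frobenius of $\mathrm{Gal}(K_v/k_v)$ (so $\sigma_{\mathrm{SL}_n}=\mathrm{id}$ since $\mathrm{SL}_n$ is split), there is $w\in W$ with $\sigma_S=w\circ\sigma_{\mathrm{SL}_n}$, one has $\sigma_S(\kappa)=\kappa$, and $\{\alpha\in\Phi^\vee:\kappa(\alpha)=1\}=\emptyset$, so that $(X^*(S),X_*(S),\emptyset,\emptyset,\sigma_S)$ — the root datum classifying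 the unramified torus $S$ — is the root datum of an endoscopic group of $\mathrm{SL}_{n,k_v}$ attached to $(\kappa,\sigma_S)$.
   Context: $\mathrm{Br}\,X=\mathrm{H}^2_{\acute et}(X,\mathbb{G}_m)$; for $x\in X(k_v)$, $\xi_v(x)=\exp(2\pi i\,\mathrm{inv}_v(x^*\xi))$ and $\tilde\xi_v(x)=\xi_v(x)/\xi_v(x_0)$. Let $\delta:X(k_v)\to\mathrm{H}^1(k_v,S)$ be the (surjective) connecting map of $1\to S\to\mathrm{SL}_{n,k_v}\to X_{k_v}\to1$; the character $\kappa_{\tilde\xi_v}$ of $\mathrm{H}^1(k_v,S)$ is defined by $\kappa_{\tilde\xi_v}(\delta(x))=\tilde\xi_v(x)$. With $\Lambda_v=\mathrm{Gal}(K_v/k_v)$ (cyclic of order $n$, acting on $X_*(S)$ by cyclic permutation of coordinates) and $I_{\Lambda_v}$ its augmentation ideal, the Tate–Nakayama isomorphism gives a surjection $X_*(S)\to X_*(S)/I_{\Lambda_v}X_*(S)\cong\mathrm{H}^1(k_v,S)$; pulling $\kappa_{\tilde\xi_v}$ back along it gives an element of $\mathrm{Hom}(X_*(S),\mathbb{C}^\times)$, also denoted $\kappa_{\tilde\xi_v}$. An unramified reductive group over $k_v$ (quasi-split, split over an unramified extension) is classified by a datum $(X^*(T),X_*(T),\Phi,\Phi^\vee,\sigma)$ with $\sigma$ induced by Frobenius. An unramified reductive $H$ is an endoscopic group of $G$ (datum $(X^*(T),X_*(T),\Phi_G,\Phi_G^\vee,\sigma_G)$) if its datum is $(X^*(T),X_*(T),\Phi_H,\Phi_H^\vee,\sigma_H)$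 with some $\kappa\in\mathrm{Hom}(X_*(T),\mathbb{C}^\times)$ and $w\in W(\Phi_G)$ such that $\sigma_H=w\circ\sigma_G$, $\sigma_H(\kappa)=\kappa$, and $\Phi_H^\vee=\{\alpha\in\Phi_G^\vee:\kappa(\alpha)=1\}$. *)

theory Defs
  imports Complex_Main "HOL-Combinatorics.Permutations" "HOL-Computational_Algebra.Primes"
begin

text \<open>Combinatorial model of the cocharacter lattice of the norm-one torus
S = ker(N : R_{K_v/k_v} G_m -> G_m) for a cyclic unramified extension K_v/k_v of
prime degree n, inside SL_n.\<close>

definition cochar_lattice :: "nat \<Rightarrow> (nat \<Rightarrow> int) set" where
  "cochar_lattice n = {z. (\<forall>i\<ge>n. z i = 0) \<and> (\<Sum>i<n. z i) = 0}"

definition basis_vec :: "nat \<Rightarrow> nat \<Rightarrow> int" where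
  "basis_vec i = (\<lambda>j. if j = i then 1 else 0)"

definition coroots :: "nat \<Rightarrow> (nat \<Rightarrow> int) set" where
  "coroots n = {(\<lambda>k. basis_vec i k - basis_vec j k) | i j. i < n \<and> j < n \<and> i \<noteq> j}"

text \<open>Action of a generator of Gal(K_v/k_v) (cyclic of order n) on X_*(S):
cyclic permutation of coordinates by r steps, r coprime to n.\<close>
definition cyc_shift :: "nat \<Rightarrow> nat \<Rightarrow> (nat \<Rightarrow> int) \<Rightarrow> (nat \<Rightarrow> int)" where
  "cyc_shift n r z = (\<lambda>i. if i < n then z ((i + r) mod n) else 0)"

definition is_character :: "nat \<Rightarrow> ((nat \<Rightarrow> int) \<Rightarrow> complex) \<Rightarrow> bool" where
  "is_character n \<kappa> \<longleftrightarrow> (\<forall>z\<in>cochar_lattice n. \<kappa> z \<noteq> 0) \<and>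
     (\<forall>z\<in>cochar_lattice n. \<forall>z'\<in>cochar_lattice n. \<kappa> (\<lambda>i. z i + z' i) = \<kappa> z * \<kappa> z')"

end

theory Submission
  imports Defs "HOL-Number_Theory.Cong"
begin

(* Since kappa is invariant under the cyclic shift, the relation kappa (e_i - e_j) = 1 is a
   preorder on the indices i, j in Z/n that is invariant under translation by r, hence (r being a
   unit) under every translation. If it related two distinct indices a and b, it would relate 0 to
   every multiple of b - a, hence (n being prime) 0 to every index; then kappa would be trivial on
   the generators e_c - e_0 of the lattice and so trivial altogether. The Weyl group element
   realising the Frobenius is the translation i -> i + r. *)

lemma add_mod_eq_add_mod_iff:
  fixes i j r :: nat
  assumes "i < n" "j < n"
  shows "(i + r) mod n = (j + r) mod n \<longleftrightarrow> i = j"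
  using assms cong_add_rcancel_nat[of i r j n] cong_less_modulus_unique_nat[of i j n]
  by (auto simp: cong_def)

lemma add_pred_mult_mod_self:
  fixes n :: nat
  assumes "0 < n"
  shows "(x + (n - 1) * x) mod n = 0"
proof -
  have "x + (n - 1) * x = n * x"
    using assms by (cases n) simp_all
  then show ?thesis
    by simp
qed

lemma translation_invariant_of_unit_translation:
  fixes R :: "nat \<Rightarrow> nat \<Rightarrow> bool"
  assumes "coprime r n"
    and mod: "\<And>x y. R x y \<longleftrightarrow> R (x mod n) (y mod n)"
    and translate_r: "\<And>x y. R x y \<Longrightarrow> R (x + r) (y + r)"
    and "R x y"
  shows "R (x + t) (y + t)"
proof -
  have translate_multiple: "R (x + k * r) (y + k * r)" for k
  proof (induction k)
    case 0
    then show ?case using \<open>R x y\<close> by simp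
  next
    case (Suc k)
    then show ?case using translate_r[of "x + k * r" "y + k * r"] by (simp add: algebra_simps)
  qed
  obtain s where "[r * s = 1] (mod n)"
    using cong_solve_coprime_nat[OF \<open>coprime r n\<close>] by auto
  then have "[s * t * r = t] (mod n)"
    using cong_mult[of "r * s" 1 n t t] by (simp add: algebra_simps)
  then have "(u + s * t * r) mod n = (u + t) mod n" for u
    by (metis cong_def mod_add_right_eq)
  then show ?thesis
    using translate_multiple[of "s * t"] mod by metis
qed

lemma translation_invariant_preorder_full:
  fixes R :: "nat \<Rightarrow> nat \<Rightarrow> bool"
  assumes "prime n"
    and mod: "\<And>x y. R x y \<longleftrightarrow> R (x mod n) (y mod n)"
    and refl: "\<And>x. R x x"
    and trans: "\<And>x y z. R x y \<Longrightarrow> R y z \<Longrightarrow> R x z"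
    and translate: "\<And>x y t. R x y \<Longrightarrow> R (x + t) (y + t)"
    and "R a b" "a mod n \<noteq> b mod n"
  shows "R x y"
proof -
  have n: "0 < n"
    using \<open>prime n\<close> prime_gt_0_nat by blast
  have mod_cong: "R x' y'" if "R x y" "x mod n = x' mod n" "y mod n = y' mod n" for x y x' y'
    using that mod by metis
  define d where "d = b + (n - 1) * a"
  have "R (a + (n - 1) * a) d"
    using translate[OF \<open>R a b\<close>] by (simp add: d_def)
  then have R0d: "R 0 d"
    by (rule mod_cong) (use add_pred_mult_mod_self[OF n, of a] in simp_all)
  have "\<not> n dvd d"
  proof
    assume "n dvd d"
    then have "[b + (n - 1) * a = a + (n - 1) * a] (mod n)"
      using add_pred_mult_mod_self[OF n, of a] by (simp add: d_def cong_def)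
    then have "[b = a] (mod n)"
      by (simp only: cong_add_rcancel_nat)
    then show False
      using \<open>a mod n \<noteq> b mod n\<close> by (simp add: cong_def)
  qed
  then have "coprime d n"
    using prime_imp_coprime_nat[OF \<open>prime n\<close>] coprime_commute by blast
  then obtain e where e: "[d * e = 1] (mod n)"
    using cong_solve_coprime_nat by auto
  have R0_multiple: "R 0 (m * d)" for m
  proof (induction m)
    case 0
    then show ?case using refl by simp
  next
    case (Suc m)
    then have "R d (m * d + d)"
      using translate[OF Suc, of d] by simp
    then show ?case
      using trans[OF R0d] by (simp add: add.commute)
  qed
  have R0: "R 0 z" for z
  proof (rule mod_cong[OF R0_multiple[of "e * z"]])
    show "(e * z * d) mod n = z mod n"
      using cong_mult[OF e cong_refl[of z]] by (simp add: cong_def algebra_simps)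
  qed simp
  have "R (0 + x) ((n - 1) * x + x)"
    using translate[OF R0] by (simp add: add.commute)
  then have Rx0: "R x 0"
    by (rule mod_cong) (use add_pred_mult_mod_self[OF n, of x] in \<open>simp_all add: add.commute\<close>)
  show ?thesis
    using trans[OF Rx0 R0] .
qed

lemma cochar_lattice_zero: "(\<lambda>i. 0) \<in> cochar_lattice n"
  by (simp add: cochar_lattice_def)

lemma cochar_lattice_add:
  "y \<in> cochar_lattice n \<Longrightarrow> z \<in> cochar_lattice n \<Longrightarrow> (\<lambda>i. y i + z i) \<in> cochar_lattice n"
  by (simp add: cochar_lattice_def sum.distrib)

lemma cochar_lattice_diff:
  "y \<in> cochar_lattice n \<Longrightarrow> z \<in> cochar_lattice n \<Longrightarrow> (\<lambda>i. y i - z i) \<in> cochar_lattice n"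
  by (simp add: cochar_lattice_def sum_subtractf)

lemma cochar_lattice_int_mult:
  "z \<in> cochar_lattice n \<Longrightarrow> (\<lambda>i. m * z i) \<in> cochar_lattice n"
  by (simp add: cochar_lattice_def sum_distrib_left[symmetric])

lemma cochar_lattice_sum:
  "finite A \<Longrightarrow> (\<And>c. c \<in> A \<Longrightarrow> g c \<in> cochar_lattice n)
    \<Longrightarrow> (\<lambda>i. \<Sum>c\<in>A. g c i) \<in> cochar_lattice n"
  by (induction A rule: finite_induct) (simp_all add: cochar_lattice_zero cochar_lattice_add)

lemma character_nonzero: "is_character n \<kappa> \<Longrightarrow> z \<in> cochar_lattice n \<Longrightarrow> \<kappa> z \<noteq> 0"
  by (simp add: is_character_def)

lemma character_add:
  "is_character n \<kappa> \<Longrightarrow> y \<in> cochar_lattice n \<Longrightarrow> z \<in> cochar_lattice n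
    \<Longrightarrow> \<kappa> (\<lambda>i. y i + z i) = \<kappa> y * \<kappa> z"
  by (simp add: is_character_def)

lemma character_diff:
  assumes "is_character n \<kappa>" "y \<in> cochar_lattice n" "z \<in> cochar_lattice n"
  shows "\<kappa> (\<lambda>i. y i - z i) = \<kappa> y / \<kappa> z"
proof -
  have "\<kappa> y = \<kappa> (\<lambda>i. (y i - z i) + z i)"
    by simp
  also have "\<dots> = \<kappa> (\<lambda>i. y i - z i) * \<kappa> z"
    using character_add[OF assms(1) cochar_lattice_diff[OF assms(2,3)] assms(3)] .
  finally show ?thesis
    using character_nonzero[OF assms(1,3)] by simp
qed

lemma character_zero: "is_character n \<kappa> \<Longrightarrow> \<kappa> (\<lambda>i. 0) = 1"
  using character_diff[of n \<kappa> "\<lambda>i. 0" "\<lambda>i. 0"] character_nonzero[of n \<kappa> "\<lambda>i. 0"]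
  by (simp add: cochar_lattice_zero)

lemma character_int_mult:
  assumes \<kappa>: "is_character n \<kappa>" and z: "z \<in> cochar_lattice n"
  shows "\<kappa> (\<lambda>i. m * z i) = \<kappa> z powi m"
proof -
  have nat_mult: "\<kappa> (\<lambda>i. int k * z i) = \<kappa> z ^ k" for k
  proof (induction k)
    case 0
    then show ?case using character_zero[OF \<kappa>] by simp
  next
    case (Suc k)
    have "\<kappa> (\<lambda>i. int (Suc k) * z i) = \<kappa> (\<lambda>i. int k * z i + z i)"
      by (simp add: algebra_simps)
    also have "\<dots> = \<kappa> z ^ Suc k"
      using Suc character_add[OF \<kappa> cochar_lattice_int_mult[OF z] z] by simp
    finally show ?case .
  qed
  show ?thesis
  proof (cases m rule: int_cases2)
    case (nonneg k)
    then show ?thesis using nat_mult by simp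
  next
    case (nonpos k)
    have "\<kappa> (\<lambda>i. m * z i) = \<kappa> (\<lambda>i. 0 - int k * z i)"
      using nonpos by simp
    also have "\<dots> = inverse (\<kappa> z ^ k)"
      using character_diff[OF \<kappa> cochar_lattice_zero cochar_lattice_int_mult[OF z]]
      by (simp add: character_zero[OF \<kappa>] nat_mult field_simps)
    finally show ?thesis
      using nonpos by (simp add: power_int_minus)
  qed
qed

lemma character_sum:
  assumes "is_character n \<kappa>"
  shows "finite A \<Longrightarrow> (\<And>c. c \<in> A \<Longrightarrow> g c \<in> cochar_lattice n)
    \<Longrightarrow> \<kappa> (\<lambda>i. \<Sum>c\<in>A. g c i) = (\<Prod>c\<in>A. \<kappa> (g c))"
proof (induction A rule: finite_induct)
  case empty
  then show ?case using character_zero[OF assms] by simp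
next
  case (insert c A)
  then show ?case
    using character_add[OF assms, of "g c" "\<lambda>i. \<Sum>c\<in>A. g c i"] cochar_lattice_sum[of A g]
    by simp
qed

(* Indices are read modulo n, so that the cyclic shift acts on coroot vectors by translating
   both indices. *)
definition coroot_vec :: "nat \<Rightarrow> nat \<Rightarrow> nat \<Rightarrow> nat \<Rightarrow> int" where
  "coroot_vec n i j = (\<lambda>k. basis_vec (i mod n) k - basis_vec (j mod n) k)"

lemma coroot_vec_in_cochar_lattice: "0 < n \<Longrightarrow> coroot_vec n i j \<in> cochar_lattice n"
  by (simp add: cochar_lattice_def coroot_vec_def basis_vec_def sum_subtractf not_le)

lemma coroot_vec_mod: "coroot_vec n (i mod n) (j mod n) = coroot_vec n i j"
  by (simp add: coroot_vec_def)

lemma coroot_vec_same: "coroot_vec n i i = (\<lambda>k. 0)"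
  by (simp add: coroot_vec_def)

lemma coroot_vec_add: "(\<lambda>k. coroot_vec n i j k + coroot_vec n j l k) = coroot_vec n i l"
  by (simp add: coroot_vec_def)

lemma coroots_eq: "coroots n = {coroot_vec n i j | i j. i < n \<and> j < n \<and> i \<noteq> j}"
  unfolding coroots_def coroot_vec_def by (metis (no_types, opaque_lifting) mod_less)

lemma cochar_lattice_eq_sum_coroot_vec:
  assumes z: "z \<in> cochar_lattice n" and n: "0 < n"
  shows "z = (\<lambda>k. \<Sum>c<n. z c * coroot_vec n c 0 k)"
proof
  fix k
  have "(\<Sum>c<n. z c * coroot_vec n c 0 k)
      = (\<Sum>c<n. if k = c then z c else 0) - (\<Sum>c<n. if k = 0 then z c else 0)"
    unfolding sum_subtractf[symmetric]
    by (rule sum.cong) (auto simp: coroot_vec_def basis_vec_def)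
  also have "\<dots> = z k"
    using z n by (cases "k < n"; cases "k = 0") (auto simp: cochar_lattice_def)
  finally show "z k = (\<Sum>c<n. z c * coroot_vec n c 0 k)"
    by simp
qed

lemma character_eq_1_if_coroot_vec_eq_1:
  assumes \<kappa>: "is_character n \<kappa>" and n: "0 < n"
    and coroot: "\<And>c. c < n \<Longrightarrow> \<kappa> (coroot_vec n c 0) = 1"
    and z: "z \<in> cochar_lattice n"
  shows "\<kappa> z = 1"
proof -
  have "\<kappa> z = (\<Prod>c<n. \<kappa> (\<lambda>k. z c * coroot_vec n c 0 k))"
    by (subst cochar_lattice_eq_sum_coroot_vec[OF z n])
      (simp add: character_sum[OF \<kappa>] cochar_lattice_int_mult coroot_vec_in_cochar_lattice n)
  also have "\<dots> = 1"
    by (simp add: character_int_mult[OF \<kappa>] coroot_vec_in_cochar_lattice n coroot)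
  finally show ?thesis .
qed
definition shift_index :: "nat \<Rightarrow> nat \<Rightarrow> nat \<Rightarrow> nat" where
  "shift_index n r i = (if i < n then (i + r) mod n else i)"

lemma shift_index_permutes: "0 < n \<Longrightarrow> shift_index n r permutes {..<n}"
proof -
  assume n: "0 < n"
  have inj: "inj_on (shift_index n r) {..<n}"
    by (rule inj_onI) (simp add: shift_index_def add_mod_eq_add_mod_iff)
  have "shift_index n r ` {..<n} = {..<n}"
    by (rule endo_inj_surj) (use inj n in \<open>auto simp: shift_index_def\<close>)
  with inj show ?thesis
    by (intro bij_imp_permutes) (auto simp: bij_betw_def shift_index_def)
qed

lemma cyc_shift_eq_comp_shift_index:
  "z \<in> cochar_lattice n \<Longrightarrow> cyc_shift n r z = z \<circ> shift_index n r"
  by (auto simp: cyc_shift_def shift_index_def cochar_lattice_def)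

lemma cyc_shift_in_cochar_lattice:
  assumes z: "z \<in> cochar_lattice n" and n: "0 < n"
  shows "cyc_shift n r z \<in> cochar_lattice n"
proof -
  have "(\<Sum>i<n. z (shift_index n r i)) = (\<Sum>i<n. z i)"
    using sum.permute[OF shift_index_permutes[of n r, OF n], of z] by simp
  then show ?thesis
    using z by (simp add: cochar_lattice_def cyc_shift_def shift_index_def)
qed

lemma cyc_shift_coroot_vec:
  assumes "0 < n"
  shows "cyc_shift n r (coroot_vec n (i + r) (j + r)) = coroot_vec n i j"
proof
  fix k
  have "(k + r) mod n = (l + r) mod n \<longleftrightarrow> k = l mod n" if "k < n" for l
    using add_mod_eq_add_mod_iff[OF that mod_less_divisor[OF assms, of l], of r]
    by (simp add: mod_add_left_eq)
  then show "cyc_shift n r (coroot_vec n (i + r) (j + r)) k = coroot_vec n i j k"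
    using mod_less_divisor[OF assms, of i] mod_less_divisor[OF assms, of j]
    by (auto simp: cyc_shift_def coroot_vec_def basis_vec_def)
qed

lemma character_cyc_shift:
  assumes \<kappa>: "is_character n \<kappa>" and n: "0 < n"
    and diff: "\<kappa> (\<lambda>i. cyc_shift n r z i - z i) = 1"
    and z: "z \<in> cochar_lattice n"
  shows "\<kappa> (cyc_shift n r z) = \<kappa> z"
  using diff character_diff[OF \<kappa> cyc_shift_in_cochar_lattice[OF z n] z]
    character_nonzero[OF \<kappa> z] by simp

lemma shift_invariant_character_eq_1_if_coroot_vec_eq_1:
  assumes n: "prime n" and r: "coprime r n" and \<kappa>: "is_character n \<kappa>"
    and invariant: "\<And>z. z \<in> cochar_lattice n \<Longrightarrow> \<kappa> (cyc_shift n r z) = \<kappa> z"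
    and "\<kappa> (coroot_vec n a b) = 1" "a mod n \<noteq> b mod n"
    and z: "z \<in> cochar_lattice n"
  shows "\<kappa> z = 1"
proof -
  have n0: "0 < n"
    using n prime_gt_0_nat by blast
  define R where "R x y \<longleftrightarrow> \<kappa> (coroot_vec n x y) = 1" for x y
  have R_mod: "R x y \<longleftrightarrow> R (x mod n) (y mod n)" for x y
    by (simp add: R_def coroot_vec_mod)
  have R_refl: "R x x" for x
    by (simp add: R_def coroot_vec_same character_zero[OF \<kappa>])
  have R_trans: "R x z" if "R x y" "R y z" for x y z
    using that character_add[OF \<kappa> coroot_vec_in_cochar_lattice[OF n0, of x y]
        coroot_vec_in_cochar_lattice[OF n0, of y z]]
    by (simp add: R_def coroot_vec_add)
  have R_translate_r: "R (x + r) (y + r)" if "R x y" for x y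
    using that invariant[OF coroot_vec_in_cochar_lattice[OF n0, of "x + r" "y + r"]]
    by (simp add: R_def cyc_shift_coroot_vec[OF n0])
  have R_translate: "R (x + t) (y + t)" if "R x y" for x y t
    by (rule translation_invariant_of_unit_translation[where R = R, OF r R_mod R_translate_r that])
  have "R a b"
    using assms(5) by (simp add: R_def)
  then have "R c 0" for c
    using translation_invariant_preorder_full[of n R a b c 0] n R_mod R_refl R_trans R_translate
      assms(6) by blast
  then show ?thesis
    using character_eq_1_if_coroot_vec_eq_1[OF \<kappa> n0 _ z] unfolding R_def by blast
qed

theorem lemma5p8:
  fixes n r :: nat and \<kappa> :: "(nat \<Rightarrow> int) \<Rightarrow> complex"
  assumes "prime (n::nat)"
    and "coprime r n"
    and "is_character n \<kappa>"
    and "\<forall>z\<in>cochar_lattice n. \<kappa> (\<lambda>i. cyc_shift n r z i - z i) = 1"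
    and "\<exists>z\<in>cochar_lattice n. \<kappa> z \<noteq> 1"
  shows "(\<exists>w. w permutes {..<n} \<and> (\<forall>z\<in>cochar_lattice n. cyc_shift n r z = z \<circ> w))
    \<and> (\<forall>z\<in>cochar_lattice n. \<kappa> (cyc_shift n r z) = \<kappa> z)
    \<and> {\<alpha>\<in>coroots n. \<kappa> \<alpha> = 1} = {}"
proof -
  have n: "0 < n"
    using assms(1) prime_gt_0_nat by blast
  have invariant: "\<kappa> (cyc_shift n r z) = \<kappa> z" if "z \<in> cochar_lattice n" for z
    using character_cyc_shift[OF assms(3) n] assms(4) that by blast
  have "\<kappa> (coroot_vec n a b) \<noteq> 1" if "a < n" "b < n" "a \<noteq> b" for a b
  proof
    assume "\<kappa> (coroot_vec n a b) = 1"
    moreover have "a mod n \<noteq> b mod n"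
      using that by simp
    ultimately have "\<kappa> z = 1" if "z \<in> cochar_lattice n" for z
      using shift_invariant_character_eq_1_if_coroot_vec_eq_1[OF assms(1-3) invariant] that by blast
    then show False
      using assms(5) by blast
  qed
  then have "{\<alpha>\<in>coroots n. \<kappa> \<alpha> = 1} = {}"
    by (auto simp: coroots_eq)
  then show ?thesis
    using shift_index_permutes[OF n] cyc_shift_eq_comp_shift_index invariant by blast
qed

end
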